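(* Let $X$ be a continuum and $Y\subset X$ a totally disconnected subset. If $y\in\Lambda(Y)$, then $F(y)$ is a non-degenerate subcontinuum of $X$ and $F(y)\cap Y=\{y\}$.
   Context: A continuum is a compact connected metric space. For $Y\subset X$ and $y\in Y$, let $\mathcal U_y$ be the collection of all open subsets $U$ of $X$ with $y\in U$ and $\partial U\subset X\setminus Y$ (boundary taken in $X$), and put $F(y)=\bigcap_{U\in\mathcal U_y}\overline U$. $Y$ is totally disconnected if every two distinct points of $Y$ lie in disjoint clopen subsets of $Y$. $Y$ is zero-dimensional at $y$ if $y$ has a neighborhood basis in $Y$ of clopen subsets of $Y$; $\Lambda(Y)$ is the set of points at which $Y$ is not zero-dimensional. *)

theory Defs
  imports "HOL-Analysis.Analysis"
begin

definition continuum :: "'a::metric_space set \<Rightarrow> bool" where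
  "continuum X \<longleftrightarrow> X \<noteq> {} \<and> compact X \<and> connected X"

definition clopen_in :: "'a::topological_space set \<Rightarrow> 'a set \<Rightarrow> bool" where
  "clopen_in Y C \<longleftrightarrow> openin (top_of_set Y) C \<and> closedin (top_of_set Y) C"

definition totally_disconnected_set :: "'a::topological_space set \<Rightarrow> bool" where
  "totally_disconnected_set Y \<longleftrightarrow>
     (\<forall>a\<in>Y. \<forall>b\<in>Y. a \<noteq> b \<longrightarrow>
        (\<exists>A B. clopen_in Y A \<and> clopen_in Y B \<and> a \<in> A \<and> b \<in> B \<and> A \<inter> B = {}))"

definition zero_dim_at :: "'a::topological_space set \<Rightarrow> 'a \<Rightarrow> bool" where
  "zero_dim_at Y y \<longleftrightarrow>
     (\<forall>V. openin (top_of_set Y) V \<and> y \<in> V \<longrightarrow> (\<exists>C. clopen_in Y C \<and> y \<in> C \<and> C \<subseteq> V))"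

definition Lambda_set :: "'a::topological_space set \<Rightarrow> 'a set" where
  "Lambda_set Y = {y \<in> Y. \<not> zero_dim_at Y y}"

definition F_set :: "'a::topological_space set \<Rightarrow> 'a set \<Rightarrow> 'a \<Rightarrow> 'a set" where
  "F_set X Y y = \<Inter> {(top_of_set X) closure_of U | U.
       openin (top_of_set X) U \<and> y \<in> U \<and> (top_of_set X) frontier_of U \<subseteq> X - Y}"

end

theory Submission
  imports Defs
begin

(* Since X is closed, F(y) is the intersection of the closures of the members of U_y, and U_y
   is closed under finite intersections; by compactness of X, every open set containing F(y)
   therefore contains the closure of a single U in U_y.  The basic observation is: if G and H
   are disjoint open sets with y in G and Y \<inter> closure U \<subseteq> G \<union> H, then U \<inter> G again lies in U_y,
   so F(y) misses H.  Applied to a separation of F(y) this gives connectedness; applied to a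
   clopen partition of Y separating y from another point of Y it gives F(y) \<inter> Y = {y}; and if
   F(y) were {y}, the traces Y \<inter> U of the U in U_y would be clopen in Y and form a neighbourhood
   base at y, i.e. Y would be zero-dimensional at y. *)

(* The family U_y, with the frontier condition stated via the ambient closure: for closed X
   the frontier of U in X is closure U - U. *)
definition frontier_avoiding_nbhds :: "'a::topological_space set \<Rightarrow> 'a set \<Rightarrow> 'a \<Rightarrow> 'a set set" where
  "frontier_avoiding_nbhds X Y y =
     {U. openin (top_of_set X) U \<and> y \<in> U \<and> (closure U - U) \<inter> Y = {}}"

lemma closure_openin_closed_subset:
  "closed X \<Longrightarrow> openin (top_of_set X) U \<Longrightarrow> closure U \<subseteq> X"
  by (rule closure_minimal[OF openin_imp_subset])

lemma closure_of_openin_closed: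
  assumes "closed X" "openin (top_of_set X) U"
  shows "top_of_set X closure_of U = closure U"
  using closure_openin_closed_subset[OF assms] openin_imp_subset[OF assms(2)]
  by (simp add: closure_of_subtopology Int_absorb1 Int_absorb2)

lemma frontier_of_openin_closed:
  assumes "closed X" "openin (top_of_set X) U"
  shows "top_of_set X frontier_of U = closure U - U"
  using assms by (simp add: frontier_of_def interior_of_openin closure_of_openin_closed)

lemma F_set_eq_Inter_closure:
  assumes "closed X"
  shows "F_set X Y y = \<Inter> (closure ` frontier_avoiding_nbhds X Y y)"
proof -
  have "top_of_set X frontier_of U \<subseteq> X - Y \<longleftrightarrow> (closure U - U) \<inter> Y = {}"
    if "openin (top_of_set X) U" for U
    using closure_openin_closed_subset[OF assms that]
    by (auto simp: frontier_of_openin_closed[OF assms that])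
  then have "F_set X Y y = \<Inter> ((\<lambda>U. top_of_set X closure_of U) ` frontier_avoiding_nbhds X Y y)"
    unfolding F_set_def frontier_avoiding_nbhds_def by (intro arg_cong[where f = Inter]) auto
  also have "\<dots> = \<Inter> (closure ` frontier_avoiding_nbhds X Y y)"
    by (intro arg_cong[where f = Inter] image_cong)
      (auto simp: frontier_avoiding_nbhds_def closure_of_openin_closed[OF assms])
  finally show ?thesis .
qed

lemma topspace_in_frontier_avoiding_nbhds:
  "closed X \<Longrightarrow> y \<in> X \<Longrightarrow> X \<in> frontier_avoiding_nbhds X Y y"
  by (simp add: frontier_avoiding_nbhds_def closure_closed)

lemma frontier_avoiding_nbhds_Int:
  assumes "U \<in> frontier_avoiding_nbhds X Y y" "V \<in> frontier_avoiding_nbhds X Y y"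
  shows "U \<inter> V \<in> frontier_avoiding_nbhds X Y y"
proof -
  have "closure (U \<inter> V) - U \<inter> V \<subseteq> (closure U - U) \<union> (closure V - V)"
    using closure_mono[of "U \<inter> V" U] closure_mono[of "U \<inter> V" V] by blast
  then show ?thesis
    using assms by (auto simp: frontier_avoiding_nbhds_def)
qed

lemma Inter_in_frontier_avoiding_nbhds:
  assumes "closed X" "y \<in> X" "finite \<V>" "\<V> \<subseteq> frontier_avoiding_nbhds X Y y"
  shows "\<Inter> (insert X \<V>) \<in> frontier_avoiding_nbhds X Y y"
  using assms(3,4)
proof (induction \<V> rule: finite_induct)
  case empty
  then show ?case using topspace_in_frontier_avoiding_nbhds[OF assms(1,2)] by simp
next
  case (insert V \<V>)
  then show ?case
    using frontier_avoiding_nbhds_Int[of V X Y y "\<Inter> (insert X \<V>)"] by (simp add: Int_ac)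
qed

lemma frontier_avoiding_nbhd_closure_subset:
  fixes X :: "'a::t2_space set"
  assumes "compact X" "y \<in> X" "open W" "F_set X Y y \<subseteq> W"
  obtains U where "U \<in> frontier_avoiding_nbhds X Y y" "closure U \<subseteq> W"
proof -
  have X: "closed X"
    using assms(1) by (rule compact_imp_closed)
  have "compact (X - W)"
    using assms(1,3) by (simp add: Diff_eq compact_Int_closed closed_Compl)
  moreover have "(X - W) \<inter> (\<Inter>U\<in>frontier_avoiding_nbhds X Y y. closure U) = {}"
    using assms(4) by (auto simp: F_set_eq_Inter_closure[OF X])
  ultimately have "\<not> (\<forall>\<V>. finite \<V> \<longrightarrow> \<V> \<subseteq> frontier_avoiding_nbhds X Y y \<longrightarrow>
      (X - W) \<inter> (\<Inter>U\<in>\<V>. closure U) \<noteq> {})"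
    using compact_imp_fip_image[of "X - W" "frontier_avoiding_nbhds X Y y" closure] by auto
  then obtain \<V> where \<V>: "finite \<V>" "\<V> \<subseteq> frontier_avoiding_nbhds X Y y"
      "(X - W) \<inter> (\<Inter>U\<in>\<V>. closure U) = {}"
    by blast
  have "closure (\<Inter> (insert X \<V>)) \<subseteq> closure X \<inter> (\<Inter>U\<in>\<V>. closure U)"
    by (intro Int_greatest INF_greatest closure_mono) auto
  then have "closure (\<Inter> (insert X \<V>)) \<subseteq> W"
    using \<V>(3) X by (auto simp: closure_closed)
  then show thesis
    using that Inter_in_frontier_avoiding_nbhds[OF X assms(2) \<V>(1,2)] by blast
qed

lemma separated_sets_disjoint_open_supersets:
  fixes S T :: "'a::metric_space set"
  assumes "separatedin euclidean S T"
  obtains G H where "open G" "open H" "S \<subseteq> G" "T \<subseteq> H" "G \<inter> H = {}"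
  using metrizable_space_separation[OF metrizable_space_euclidean assms] that
  by (auto simp: disjnt_def)

lemma F_set_disjoint_open:
  assumes "closed X" "U \<in> frontier_avoiding_nbhds X Y y"
    and "open G" "open H" "G \<inter> H = {}" "y \<in> G" "closure U \<inter> Y \<subseteq> G \<union> H"
  shows "F_set X Y y \<inter> H = {}"
proof -
  have H: "closure (U \<inter> G) \<inter> H = {}"
    using assms(4,5) open_Int_closure_eq_empty[of H "U \<inter> G"] by blast
  have "(closure (U \<inter> G) - U \<inter> G) \<inter> Y \<subseteq> (closure U - U) \<inter> Y"
    using assms(7) H closure_mono[of "U \<inter> G" U] by blast
  then have "U \<inter> G \<in> frontier_avoiding_nbhds X Y y"
    using assms(2,3,6) by (auto simp: frontier_avoiding_nbhds_def openin_Int_open)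
  then have "F_set X Y y \<subseteq> closure (U \<inter> G)"
    by (auto simp: F_set_eq_Inter_closure[OF assms(1)])
  then show ?thesis
    using H by blast
qed

lemma clopen_in_Int_frontier_avoiding_nbhd:
  assumes "Y \<subseteq> X" "U \<in> frontier_avoiding_nbhds X Y y"
  shows "clopen_in Y (Y \<inter> U)"
proof -
  obtain T where "open T" "U = X \<inter> T"
    using assms(2) by (auto simp: frontier_avoiding_nbhds_def openin_open)
  moreover have "Y \<inter> U = Y \<inter> T"
    using assms(1) \<open>U = X \<inter> T\<close> by blast
  ultimately have "openin (top_of_set Y) (Y \<inter> U)"
    by (simp add: openin_open_Int)
  moreover have "Y \<inter> U = Y \<inter> closure U"
    using assms(2) closure_subset[of U] by (auto simp: frontier_avoiding_nbhds_def)
  then have "closedin (top_of_set Y) (Y \<inter> U)"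
    by (simp add: closedin_closed_Int)
  ultimately show ?thesis
    by (simp add: clopen_in_def)
qed

lemma point_in_F_set: "closed X \<Longrightarrow> y \<in> F_set X Y y"
  using closure_subset by (fastforce simp: F_set_eq_Inter_closure frontier_avoiding_nbhds_def)

lemma F_set_subset:
  assumes "closed X" "y \<in> X"
  shows "F_set X Y y \<subseteq> X"
proof -
  have "X \<in> frontier_avoiding_nbhds X Y y"
    using assms by (rule topspace_in_frontier_avoiding_nbhds)
  then have "F_set X Y y \<subseteq> closure X"
    by (auto simp: F_set_eq_Inter_closure[OF assms(1)])
  then show ?thesis
    using assms(1) by (simp add: closure_closed)
qed

lemma closed_F_set: "closed X \<Longrightarrow> closed (F_set X Y y)"
  by (auto simp: F_set_eq_Inter_closure intro!: closed_Inter)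

lemma compact_F_set:
  fixes X :: "'a::t2_space set"
  assumes "compact X" "y \<in> X"
  shows "compact (F_set X Y y)"
proof -
  have "closed X"
    using assms(1) by (rule compact_imp_closed)
  then have "closed (F_set X Y y)" "F_set X Y y \<subseteq> X"
    using assms(2) by (simp_all add: closed_F_set F_set_subset)
  then show ?thesis
    using assms(1) compact_Int_closed[of X "F_set X Y y"] by (simp add: Int_absorb1)
qed

lemma connected_F_set:
  fixes X :: "'a::metric_space set"
  assumes "compact X" "y \<in> X"
  shows "connected (F_set X Y y)"
proof -
  have X: "closed X"
    using assms(1) by (rule compact_imp_closed)
  have no_split: "B = {}"
    if split: "closed A" "closed B" "A \<union> B = F_set X Y y" "A \<inter> B = {}" "y \<in> A" for A B
  proof -
    have "separatedin euclidean A B"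
      using split(1,2,4) by (simp add: separatedin_closed_sets disjnt_def)
    then obtain G H where GH: "open G" "open H" "A \<subseteq> G" "B \<subseteq> H" "G \<inter> H = {}"
      by (rule separated_sets_disjoint_open_supersets)
    then obtain U where "U \<in> frontier_avoiding_nbhds X Y y" "closure U \<subseteq> G \<union> H"
      using frontier_avoiding_nbhd_closure_subset[OF assms, of "G \<union> H" Y] split(3) by blast
    then have "F_set X Y y \<inter> H = {}"
      using F_set_disjoint_open[OF X _ GH(1,2,5)] GH(3) split(5) by blast
    then show ?thesis
      using split(3) GH(4) by blast
  qed
  show ?thesis
    unfolding connected_closed_set[OF closed_F_set[OF X]]
    using no_split point_in_F_set[OF X] by (metis Int_commute Un_iff Un_commute)
qed

lemma F_set_Int_totally_disconnected:
  fixes X :: "'a::metric_space set"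
  assumes "closed X" "y \<in> X" "y \<in> Y" "totally_disconnected_set Y"
  shows "F_set X Y y \<inter> Y = {y}"
proof (rule ccontr)
  assume "F_set X Y y \<inter> Y \<noteq> {y}"
  then obtain z where z: "z \<in> F_set X Y y" "z \<in> Y" "z \<noteq> y"
    using point_in_F_set[OF assms(1)] assms(3) by blast
  then obtain A where A: "clopen_in Y A" "y \<in> A" "z \<notin> A"
    using assms(3,4) unfolding totally_disconnected_set_def by blast
  have "separatedin (top_of_set Y) A (Y - A)"
    using A(1) by (subst separatedin_full)
      (auto simp: clopen_in_def disjnt_def openin_diff closedin_diff dest: openin_imp_subset)
  then have "separatedin euclidean A (Y - A)"
    by (simp add: separatedin_subtopology)
  then obtain G H where GH: "open G" "open H" "A \<subseteq> G" "Y - A \<subseteq> H" "G \<inter> H = {}"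
    by (rule separated_sets_disjoint_open_supersets)
  have "F_set X Y y \<inter> H = {}"
    using F_set_disjoint_open[OF assms(1) topspace_in_frontier_avoiding_nbhds[OF assms(1,2)] GH(1,2,5)]
      A(2) GH(3,4) by blast
  then show False
    using z A(3) GH(4) by blast
qed

lemma zero_dim_at_if_F_set_subset_singleton:
  fixes X :: "'a::t2_space set"
  assumes "compact X" "Y \<subseteq> X" "y \<in> Y" "F_set X Y y \<subseteq> {y}"
  shows "zero_dim_at Y y"
  unfolding zero_dim_at_def
proof (intro allI impI, elim conjE)
  fix V assume V: "openin (top_of_set Y) V" "y \<in> V"
  then obtain T where T: "open T" "V = Y \<inter> T"
    by (auto simp: openin_open)
  then obtain U where U: "U \<in> frontier_avoiding_nbhds X Y y" "closure U \<subseteq> T"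
    using frontier_avoiding_nbhd_closure_subset[OF assms(1) _ T(1)] assms V(2) by blast
  then have "clopen_in Y (Y \<inter> U)" "y \<in> Y \<inter> U" "Y \<inter> U \<subseteq> V"
    using clopen_in_Int_frontier_avoiding_nbhd[OF assms(2)] assms(3) T(2) closure_subset[of U]
    by (auto simp: frontier_avoiding_nbhds_def)
  then show "\<exists>C. clopen_in Y C \<and> y \<in> C \<and> C \<subseteq> V"
    by blast
qed

theorem lemma1:
  fixes X Y :: "'a::metric_space set" and y :: 'a
  assumes "continuum X" and "Y \<subseteq> X" and "totally_disconnected_set Y"
    and "y \<in> Lambda_set Y"
  shows "F_set X Y y \<subseteq> X \<and> compact (F_set X Y y) \<and> connected (F_set X Y y)
         \<and> (\<exists>a\<in>F_set X Y y. \<exists>b\<in>F_set X Y y. a \<noteq> b)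
         \<and> F_set X Y y \<inter> Y = {y}"
proof -
  have X: "compact X" "closed X"
    using assms(1) compact_imp_closed by (auto simp: continuum_def)
  have y: "y \<in> Y" "\<not> zero_dim_at Y y" "y \<in> X"
    using assms(2,4) by (auto simp: Lambda_set_def)
  have "\<not> F_set X Y y \<subseteq> {y}"
    using zero_dim_at_if_F_set_subset_singleton[OF X(1) assms(2) y(1)] y(2) by blast
  then have "\<exists>a\<in>F_set X Y y. \<exists>b\<in>F_set X Y y. a \<noteq> b"
    using point_in_F_set[OF X(2)] by blast
  then show ?thesis
    using F_set_subset[OF X(2) y(3)] compact_F_set[OF X(1) y(3)] connected_F_set[OF X(1) y(3)]
      F_set_Int_totally_disconnected[OF X(2) y(3,1) assms(3)] by blast
qed

end
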